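(* Let $n\ge2$. (1) For every initial vector $\mathbf p^0\in\Delta_n$ with $p^0_i>0$ for all $i$, the trajectory $\mathbf p^{t+1}=F(\mathbf p^t)$ converges to $(\frac1n,\dots,\frac1n)$. (2) The set $\partial\Delta_n=\{\mathbf p\in\Delta_n:\ p_i=0\text{ for some }i\}$ is invariant under $F$, and every fixed point of $F$ lying in $\partial\Delta_n$ is an unstable fixed point of $F$ on $\Delta_n$ (a repeller: arbitrarily small perturbations making its zero coordinates positive are not damped).
   Context: $\Delta_n=\{\mathbf p\in\mathbb R^n: p_i\ge 0,\ \sum_i p_i=1\}$. For $\mathbf p\in\Delta_n$, $L(\mathbf p)=\sum_{k}p_k^2$ and $F(\mathbf p)_i=p_i\frac{n-p_i}{n-L(\mathbf p)}$. *)

theory Defs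
  imports "HOL-Analysis.Analysis"
begin

text \<open>Vectors in R^n are modelled as real^'n, with n = CARD('n).\<close>

definition Delta :: "(real ^ 'n) set" where
  "Delta = {p. (\<forall>i. p $ i \<ge> 0) \<and> (\<Sum>i\<in>UNIV. p $ i) = 1}"

definition Lsq :: "real ^ 'n \<Rightarrow> real" where
  "Lsq p = (\<Sum>k\<in>UNIV. (p $ k)^2)"

definition Fmap :: "real ^ 'n \<Rightarrow> real ^ 'n" where
  "Fmap p = (\<chi> i. p $ i * (real CARD('n) - p $ i) / (real CARD('n) - Lsq p))"

definition bdry_Delta :: "(real ^ 'n) set" where
  "bdry_Delta = {p \<in> Delta. \<exists>i. p $ i = 0}"

definition barycenter :: "real ^ 'n" where
  "barycenter = (\<chi> i. 1 / real CARD('n))"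

definition lyapunov_stable_on :: "'a::metric_space set \<Rightarrow> ('a \<Rightarrow> 'a) \<Rightarrow> 'a \<Rightarrow> bool" where
  "lyapunov_stable_on S f q \<longleftrightarrow>
     (\<forall>\<epsilon>>0. \<exists>\<delta>>0. \<forall>p\<in>S. dist p q < \<delta> \<longrightarrow> (\<forall>t. dist ((f ^^ t) p) q < \<epsilon>))"

definition unstable_fixed_point_on :: "(real ^ 'n) set \<Rightarrow> (real ^ 'n \<Rightarrow> real ^ 'n) \<Rightarrow> real ^ 'n \<Rightarrow> bool" where
  "unstable_fixed_point_on S f q \<longleftrightarrow> q \<in> S \<and> f q = q \<and>
     (\<exists>\<epsilon>>0. \<forall>\<delta>>0. \<exists>p\<in>S. (\<forall>i. p $ i > 0) \<and> dist p q < \<delta> \<and> (\<exists>t. dist ((f ^^ t) p) q \<ge> \<epsilon>))"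

end

theory Submission
  imports Defs
begin

text \<open>For positive \<open>p\<close> the ratio \<open>r = p\<^sub>j / p\<^sub>i\<close> is mapped to a ratio \<open>r'\<close> with
  \<open>r' - 1 = (r - 1) (n - p\<^sub>i - p\<^sub>j) / (n - p\<^sub>i)\<close>, so \<open>|r - 1|\<close> shrinks at least by the factor
  \<open>1 - p\<^sub>j / n\<close>. Hence all ratios stay bounded along an orbit, which bounds every coordinate
  uniformly away from 0; the contraction is then geometric, all ratios tend to 1, and the orbit
  tends to the barycenter. A zero coordinate stays zero under \<open>F\<close>, and every boundary point
  differs from the barycenter while interior points arbitrarily close to it are attracted to the
  barycenter, so boundary fixed points are repellers.\<close>

lemma Fmap_nth:
  "Fmap p $ i = p $ i * (real CARD('n) - p $ i) / (real CARD('n) - Lsq (p :: real ^ 'n))"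
  by (simp add: Fmap_def)

lemma Delta_nonneg: "p \<in> Delta \<Longrightarrow> p $ i \<ge> 0"
  by (simp add: Delta_def)

lemma Delta_sum: "p \<in> Delta \<Longrightarrow> (\<Sum>i\<in>UNIV. p $ i) = 1"
  by (simp add: Delta_def)

lemma Delta_nth_le_1:
  assumes "p \<in> Delta"
  shows "p $ i \<le> 1"
proof -
  have "p $ i \<le> (\<Sum>k\<in>UNIV. p $ k)"
    by (rule member_le_sum) (use assms Delta_nonneg in auto)
  then show ?thesis using Delta_sum[OF assms] by simp
qed

lemma Lsq_le_1:
  assumes "p \<in> Delta"
  shows "Lsq p \<le> 1"
proof -
  have "(p $ k)\<^sup>2 \<le> p $ k" for k
    using Delta_nonneg[OF assms, of k] Delta_nth_le_1[OF assms, of k]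
    by (simp add: power2_eq_square mult_left_le)
  then have "Lsq p \<le> (\<Sum>k\<in>UNIV. p $ k)"
    unfolding Lsq_def by (rule sum_mono)
  then show ?thesis using Delta_sum[OF assms] by simp
qed

lemma Lsq_less_card:
  assumes "CARD('n) \<ge> 2" and "(p :: real ^ 'n) \<in> Delta"
  shows "Lsq p < real CARD('n)"
  using assms Lsq_le_1[of p] by linarith

lemma Fmap_in_Delta:
  assumes n: "CARD('n) \<ge> 2" and p: "(p :: real ^ 'n) \<in> Delta"
  shows "Fmap p \<in> Delta"
proof -
  define N where "N = real CARD('n)"
  have N2: "N \<ge> 2" using n by (simp add: N_def)
  have L: "Lsq p < N" using Lsq_less_card[OF n p] by (simp add: N_def)
  have nonneg: "Fmap p $ i \<ge> 0" for i
    unfolding Fmap_nth N_def[symmetric] using L N2 Delta_nonneg[OF p, of i] Delta_nth_le_1[OF p, of i]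
    by (intro divide_nonneg_pos mult_nonneg_nonneg) auto
  have "(\<Sum>i\<in>UNIV. Fmap p $ i) = (\<Sum>i\<in>UNIV. p $ i * (N - p $ i)) / (N - Lsq p)"
    unfolding Fmap_nth N_def[symmetric] by (simp add: sum_divide_distrib)
  also have "(\<Sum>i\<in>UNIV. p $ i * (N - p $ i)) = N * (\<Sum>i\<in>UNIV. p $ i) - Lsq p"
    by (simp add: Lsq_def algebra_simps sum_distrib_left sum_subtractf power2_eq_square)
  also have "\<dots> = N - Lsq p" using Delta_sum[OF p] by simp
  finally have "(\<Sum>i\<in>UNIV. Fmap p $ i) = 1" using L by simp
  then show ?thesis using nonneg by (simp add: Delta_def)
qed

lemma Fmap_nth_pos:
  assumes n: "CARD('n) \<ge> 2" and p: "(p :: real ^ 'n) \<in> Delta" and "p $ i > 0"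
  shows "Fmap p $ i > 0"
  unfolding Fmap_nth using assms Delta_nth_le_1[OF p, of i] Lsq_less_card[OF n p]
  by (intro divide_pos_pos mult_pos_pos) auto

lemma Fmap_iter_in_Delta_pos:
  assumes "CARD('n) \<ge> 2" and "(p :: real ^ 'n) \<in> Delta" and "\<forall>i. p $ i > 0"
  shows "(Fmap ^^ t) p \<in> Delta \<and> (\<forall>i. (Fmap ^^ t) p $ i > 0)"
  by (induction t) (use assms Fmap_in_Delta[OF assms(1)] Fmap_nth_pos[OF assms(1)] in auto)

lemma Fmap_ratio_minus_1:
  assumes n: "CARD('n) \<ge> 2" and p: "(p :: real ^ 'n) \<in> Delta" and "p $ i > 0"
  shows "Fmap p $ j / Fmap p $ i - 1
           = (p $ j / p $ i - 1) * ((real CARD('n) - p $ j - p $ i) / (real CARD('n) - p $ i))"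
proof -
  define N where "N = real CARD('n)"
  have "N - Lsq p \<noteq> 0" "N - p $ i \<noteq> 0"
    using Lsq_less_card[OF n p] Delta_nth_le_1[OF p, of i] n by (auto simp: N_def)
  then have "Fmap p $ j / Fmap p $ i = p $ j * (N - p $ j) / (p $ i * (N - p $ i))"
    unfolding Fmap_nth N_def[symmetric] by simp
  also have "\<dots> - 1 = (p $ j / p $ i - 1) * ((N - p $ j - p $ i) / (N - p $ i))"
    using assms(3) \<open>N - p $ i \<noteq> 0\<close> by (simp add: field_simps)
  finally show ?thesis by (simp add: N_def)
qed

lemma Fmap_ratio_contraction:
  assumes n: "CARD('n) \<ge> 2" and p: "(p :: real ^ 'n) \<in> Delta" and pos: "\<forall>k. p $ k > 0"
  shows "\<bar>Fmap p $ j / Fmap p $ i - 1\<bar> \<le> \<bar>p $ j / p $ i - 1\<bar> * (1 - p $ j / real CARD('n))"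
proof -
  define N where "N = real CARD('n)"
  have N2: "N \<ge> 2" using n by (simp add: N_def)
  have a: "0 < p $ j" "p $ j \<le> 1" and b: "0 < p $ i" "p $ i \<le> 1"
    using pos Delta_nth_le_1[OF p] by auto
  have f0: "(N - p $ j - p $ i) / (N - p $ i) \<ge> 0"
    using a b N2 by simp
  have f1: "(N - p $ j - p $ i) / (N - p $ i) \<le> 1 - p $ j / N"
    using a b N2 by (simp add: field_simps)
  have "\<bar>Fmap p $ j / Fmap p $ i - 1\<bar> = \<bar>p $ j / p $ i - 1\<bar> * ((N - p $ j - p $ i) / (N - p $ i))"
    unfolding Fmap_ratio_minus_1[OF n p b(1)] N_def[symmetric] by (simp only: abs_mult abs_of_nonneg[OF f0])
  also have "\<dots> \<le> \<bar>p $ j / p $ i - 1\<bar> * (1 - p $ j / N)"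
    by (rule mult_left_mono[OF f1]) simp
  finally show ?thesis by (simp add: N_def)
qed

lemma Fmap_iter_ratio_dev_le_initial:
  assumes n: "CARD('n) \<ge> 2" and "(p :: real ^ 'n) \<in> Delta" and "\<forall>i. p $ i > 0"
  shows "\<bar>(Fmap ^^ t) p $ j / (Fmap ^^ t) p $ i - 1\<bar> \<le> \<bar>p $ j / p $ i - 1\<bar>"
proof (induction t)
  case 0
  then show ?case by simp
next
  case (Suc t)
  let ?q = "(Fmap ^^ t) p"
  have q: "?q \<in> Delta" "\<forall>k. ?q $ k > 0"
    using Fmap_iter_in_Delta_pos[OF assms] by auto
  have "\<bar>Fmap ?q $ j / Fmap ?q $ i - 1\<bar> \<le> \<bar>?q $ j / ?q $ i - 1\<bar> * (1 - ?q $ j / real CARD('n))"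
    by (rule Fmap_ratio_contraction[OF n q])
  also have "\<dots> \<le> \<bar>?q $ j / ?q $ i - 1\<bar>"
    using q(2) by (simp add: mult_left_le less_imp_le)
  finally show ?case using Suc by simp
qed

lemma Delta_nth_ge_of_ratio_bound:
  assumes p: "p \<in> Delta" and pi: "p $ i > 0" and R: "\<And>j. p $ j / p $ i \<le> R j"
  shows "1 / (\<Sum>j\<in>UNIV. R j) \<le> p $ i"
proof -
  have "1 = (\<Sum>j\<in>UNIV. p $ i * (p $ j / p $ i))"
    using Delta_sum[OF p] pi by simp
  also have "\<dots> \<le> (\<Sum>j\<in>UNIV. p $ i * R j)"
    by (intro sum_mono mult_left_mono R) (use pi in simp)
  also have "\<dots> = p $ i * (\<Sum>j\<in>UNIV. R j)"
    by (simp add: sum_distrib_left)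
  finally have "1 \<le> p $ i * (\<Sum>j\<in>UNIV. R j)" .
  moreover from this have "(\<Sum>j\<in>UNIV. R j) > 0"
    using pi by (smt (verit) mult_nonneg_nonpos)
  ultimately show ?thesis by (simp add: field_simps)
qed

lemma Fmap_iter_uniformly_pos:
  assumes "CARD('n) \<ge> 2" and "(p :: real ^ 'n) \<in> Delta" and "\<forall>i. p $ i > 0"
  obtains c where "c > 0" "\<And>t i. c \<le> (Fmap ^^ t) p $ i"
proof -
  define c where "c = Min (range (\<lambda>i. 1 / (\<Sum>j\<in>UNIV. 1 + \<bar>p $ j / p $ i - 1\<bar>)))"
  have "c > 0"
    unfolding c_def by (subst Min_gr_iff) (auto intro!: sum_pos)
  moreover have "c \<le> (Fmap ^^ t) p $ i" for t i
  proof -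
    have "c \<le> 1 / (\<Sum>j\<in>UNIV. 1 + \<bar>p $ j / p $ i - 1\<bar>)"
      unfolding c_def by (rule Min_le) auto
    also have "\<dots> \<le> (Fmap ^^ t) p $ i"
    proof (rule Delta_nth_ge_of_ratio_bound)
      fix j
      show "(Fmap ^^ t) p $ j / (Fmap ^^ t) p $ i \<le> 1 + \<bar>p $ j / p $ i - 1\<bar>"
        using Fmap_iter_ratio_dev_le_initial[OF assms, of t j i] by (simp add: abs_le_iff)
    qed (use Fmap_iter_in_Delta_pos[OF assms, of t] in auto)
    finally show ?thesis .
  qed
  ultimately show ?thesis using that by blast
qed

lemma Fmap_iter_ratio_dev_geometric:
  assumes n: "CARD('n) \<ge> 2" and p: "(p :: real ^ 'n) \<in> Delta" and "\<forall>i. p $ i > 0"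
    and c: "\<And>t i. c \<le> (Fmap ^^ t) p $ i"
  shows "\<bar>(Fmap ^^ t) p $ j / (Fmap ^^ t) p $ i - 1\<bar>
           \<le> \<bar>p $ j / p $ i - 1\<bar> * (1 - c / real CARD('n)) ^ t"
proof (induction t)
  case 0
  then show ?case by simp
next
  case (Suc t)
  let ?q = "(Fmap ^^ t) p" and ?r = "1 - c / real CARD('n)"
  have q: "?q \<in> Delta" "\<forall>k. ?q $ k > 0"
    using Fmap_iter_in_Delta_pos[OF assms(1-3)] by auto
  have r: "0 \<le> ?r"
    using c[of 0 j] Delta_nth_le_1[OF p, of j] n by simp
  have "\<bar>Fmap ?q $ j / Fmap ?q $ i - 1\<bar> \<le> \<bar>?q $ j / ?q $ i - 1\<bar> * (1 - ?q $ j / real CARD('n))"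
    by (rule Fmap_ratio_contraction[OF n q])
  also have "\<dots> \<le> \<bar>?q $ j / ?q $ i - 1\<bar> * ?r"
    using c[of t j] by (intro mult_left_mono diff_left_mono divide_right_mono) auto
  also have "\<dots> \<le> \<bar>p $ j / p $ i - 1\<bar> * ?r ^ t * ?r"
    by (rule mult_right_mono[OF Suc r])
  finally show ?case by (simp only: power_Suc2 mult.assoc funpow.simps o_apply)
qed

lemma Fmap_iter_ratio_tendsto_1:
  assumes "CARD('n) \<ge> 2" and "(p :: real ^ 'n) \<in> Delta" and "\<forall>i. p $ i > 0"
  shows "(\<lambda>t. (Fmap ^^ t) p $ j / (Fmap ^^ t) p $ i) \<longlonglongrightarrow> 1"
proof -
  obtain c where c0: "c > 0" and c: "\<And>t i. c \<le> (Fmap ^^ t) p $ i"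
    using Fmap_iter_uniformly_pos[OF assms] by blast
  let ?r = "1 - c / real CARD('n)"
  have r: "0 \<le> ?r" "?r < 1"
    using c[of 0 j] Delta_nth_le_1[OF assms(2), of j] c0 assms(1) by auto
  have geometric: "(\<lambda>t. \<bar>p $ j / p $ i - 1\<bar> * ?r ^ t) \<longlonglongrightarrow> 0"
    by (intro tendsto_mult_right_zero LIMSEQ_power_zero) (use r in simp)
  have "(\<lambda>t. (Fmap ^^ t) p $ j / (Fmap ^^ t) p $ i - 1) \<longlonglongrightarrow> 0"
    by (rule Lim_null_comparison[OF always_eventually geometric])
       (simp add: Fmap_iter_ratio_dev_geometric[OF assms c])
  then show ?thesis
    using Lim_null by blast
qed

lemma Delta_tendsto_barycenter_of_ratios:
  assumes P: "\<And>t. P t \<in> Delta" "\<And>t i. P t $ i > 0"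
    and ratio: "\<And>i j. (\<lambda>t. P t $ j / P t $ i) \<longlonglongrightarrow> 1"
  shows "P \<longlonglongrightarrow> (barycenter :: real ^ 'n)"
proof (rule vec_tendstoI)
  fix i
  have "(\<lambda>t. 1 / (\<Sum>j\<in>UNIV. P t $ j / P t $ i)) \<longlonglongrightarrow> 1 / (\<Sum>j\<in>(UNIV :: 'n set). 1)"
    by (intro tendsto_divide tendsto_const tendsto_sum ratio) simp
  moreover have "1 / (\<Sum>j\<in>UNIV. P t $ j / P t $ i) = P t $ i" for t
    using Delta_sum[OF P(1)] by (simp add: sum_divide_distrib[symmetric])
  ultimately show "((\<lambda>t. P t $ i) \<longlongrightarrow> barycenter $ i) sequentially"
    by (simp add: barycenter_def)
qed

lemma Fmap_iter_tendsto_barycenter: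
  assumes "CARD('n) \<ge> 2" and "(p :: real ^ 'n) \<in> Delta" and "\<forall>i. p $ i > 0"
  shows "(\<lambda>t. (Fmap ^^ t) p) \<longlonglongrightarrow> barycenter"
  using Fmap_iter_in_Delta_pos[OF assms] Fmap_iter_ratio_tendsto_1[OF assms]
  by (intro Delta_tendsto_barycenter_of_ratios) auto

lemma Fmap_bdry_Delta:
  assumes "CARD('n) \<ge> 2" and p: "(p :: real ^ 'n) \<in> bdry_Delta"
  shows "Fmap p \<in> bdry_Delta"
proof -
  obtain i where "p $ i = 0" using p by (auto simp: bdry_Delta_def)
  then have "Fmap p $ i = 0" by (simp add: Fmap_nth)
  then show ?thesis
    using Fmap_in_Delta[OF assms(1)] p by (auto simp: bdry_Delta_def)
qed

lemma barycenter_in_Delta: "(barycenter :: real ^ 'n) \<in> Delta"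
  by (simp add: Delta_def barycenter_def)

lemma bdry_Delta_ne_barycenter: "(q :: real ^ 'n) \<in> bdry_Delta \<Longrightarrow> q \<noteq> barycenter"
  by (auto simp: bdry_Delta_def barycenter_def)

lemma Delta_pos_points_near:
  assumes q: "(q :: real ^ 'n) \<in> Delta" and "\<delta> > 0"
  obtains p where "p \<in> Delta" "\<forall>i. p $ i > 0" "dist p q < \<delta>"
proof -
  define b where "b = (barycenter :: real ^ 'n)"
  define l where "l = min (1/2) (\<delta> / (2 * (dist b q + 1)))"
  have d: "dist b q + 1 > 0"
    by (simp add: add_nonneg_pos)
  have l: "0 < l" "l \<le> 1/2"
    using \<open>\<delta> > 0\<close> d unfolding l_def by (simp_all only: min.cobounded1) simp
  have "l * dist b q \<le> l * (dist b q + 1)"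
    using l by simp
  also have "\<dots> \<le> \<delta> / (2 * (dist b q + 1)) * (dist b q + 1)"
    using d unfolding l_def by (intro mult_right_mono min.cobounded2) auto
  also have "\<dots> = \<delta> / 2"
    using d by (simp add: field_simps)
  finally have close: "l * dist b q < \<delta>"
    using \<open>\<delta> > 0\<close> by simp
  define p where "p = (1 - l) *\<^sub>R q + l *\<^sub>R b"
  have pos: "\<forall>i. p $ i > 0"
    using l Delta_nonneg[OF q] by (auto simp: p_def b_def barycenter_def add_nonneg_pos)
  have "p \<in> Delta"
    using Delta_sum[OF q] Delta_sum[OF barycenter_in_Delta[where 'n = 'n]] pos
    by (simp add: Delta_def p_def b_def sum.distrib sum_distrib_left[symmetric] less_imp_le)
  moreover have "dist p q = l * dist b q"
  proof -
    have "p - q = l *\<^sub>R (b - q)"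
      by (simp add: p_def algebra_simps)
    then show ?thesis using l by (simp add: dist_norm)
  qed
  ultimately show ?thesis using that pos close by simp
qed

lemma Fmap_unstable_fixed_point:
  assumes n: "CARD('n) \<ge> 2" and q: "(q :: real ^ 'n) \<in> Delta" "q \<noteq> barycenter" "Fmap q = q"
  shows "unstable_fixed_point_on Delta Fmap q"
  unfolding unstable_fixed_point_on_def
proof (intro conjI exI[of _ "dist barycenter q / 2"] allI impI)
  let ?e = "dist barycenter q / 2"
  show "?e > 0" using q(2) by simp
  fix \<delta> :: real
  assume "\<delta> > 0"
  then obtain p where p: "p \<in> Delta" "\<forall>i. p $ i > 0" "dist p q < \<delta>"
    using Delta_pos_points_near[OF q(1)] by blast
  have "eventually (\<lambda>t. dist ((Fmap ^^ t) p) barycenter < ?e) sequentially"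
    using Fmap_iter_tendsto_barycenter[OF n p(1,2)] \<open>?e > 0\<close> by (rule tendstoD)
  then obtain t where "dist ((Fmap ^^ t) p) barycenter < ?e"
    by (auto simp: eventually_sequentially)
  then have "dist ((Fmap ^^ t) p) q \<ge> ?e"
    using dist_triangle[of barycenter q "(Fmap ^^ t) p"] by (simp add: dist_commute)
  then show "\<exists>p\<in>Delta. (\<forall>i. p $ i > 0) \<and> dist p q < \<delta> \<and> (\<exists>t. dist ((Fmap ^^ t) p) q \<ge> ?e)"
    using p by blast
qed (use q in auto)

lemma unstable_fixed_point_on_imp_not_lyapunov_stable_on:
  assumes "unstable_fixed_point_on S f q"
  shows "\<not> lyapunov_stable_on S f q"
proof
  assume stable: "lyapunov_stable_on S f q"
  obtain e where "e > 0"
    and e: "\<forall>\<delta>>0. \<exists>p\<in>S. (\<forall>i. p $ i > 0) \<and> dist p q < \<delta> \<and> (\<exists>t. dist ((f ^^ t) p) q \<ge> e)"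
    using assms unfolding unstable_fixed_point_on_def by blast
  obtain d where "d > 0" and d: "\<forall>p\<in>S. dist p q < d \<longrightarrow> (\<forall>t. dist ((f ^^ t) p) q < e)"
    using stable \<open>e > 0\<close> unfolding lyapunov_stable_on_def by blast
  show False
    using e[rule_format, OF \<open>d > 0\<close>] d by (meson not_less)
qed

theorem corollary1:
  assumes "CARD('n) \<ge> 2"
  shows "(\<forall>p0 :: real ^ 'n. p0 \<in> Delta \<and> (\<forall>i. p0 $ i > 0) \<longrightarrow>
            (\<lambda>t. (Fmap ^^ t) p0) \<longlonglongrightarrow> barycenter)
       \<and> (\<forall>p :: real ^ 'n. p \<in> bdry_Delta \<longrightarrow> Fmap p \<in> bdry_Delta)
       \<and> (\<forall>q :: real ^ 'n. q \<in> bdry_Delta \<and> Fmap q = q \<longrightarrow>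
            unstable_fixed_point_on Delta Fmap q \<and> \<not> lyapunov_stable_on Delta Fmap q)"
proof (intro conjI allI impI)
  fix q :: "real ^ 'n"
  assume q: "q \<in> bdry_Delta \<and> Fmap q = q"
  then have "q \<in> Delta" "q \<noteq> barycenter"
    using bdry_Delta_ne_barycenter by (auto simp: bdry_Delta_def)
  then show unstable: "unstable_fixed_point_on Delta Fmap q"
    using Fmap_unstable_fixed_point[OF assms] q by blast
  show "\<not> lyapunov_stable_on Delta Fmap q"
    using unstable_fixed_point_on_imp_not_lyapunov_stable_on[OF unstable] .
qed (use assms Fmap_iter_tendsto_barycenter Fmap_bdry_Delta in auto)

end
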